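(* Let $N\ge1$, $p,q>0$ with $p+q=1$. Let $P'_{Y'}(X';t)$ be the transition probability of the AZRP with $N$ particles from $Y'$ to $X'$ at time $t$, and $P_Y(X;t)$ the transition probability of the ASEP with $N$ particles from $Y$ to $X$ at time $t$. Define $f(x_1,\dots,x_N)=(x_1+1,x_2+2,\dots,x_N+N)$, a bijection from $\{x_1\le\cdots\le x_N\}\subset\mathbb{Z}^N$ onto $\{x_1<\cdots<x_N\}\subset\mathbb{Z}^N$. Then for all $X',Y'$ with weakly increasing coordinates and all $t\ge0$, $P'_{Y'}(X';t)=P_{f(Y')}(f(X');t)$.
   Context: AZRP: any number of particles may occupy a site of $\mathbb{Z}$; from each occupied site one particle leaves at rate $1$, moving to the right neighbor with probability $p$ and to the left neighbor with probability $q$; configurations are the ordered positions $x_1\le\cdots\le x_N$. ASEP (asymmetric simple exclusion process): at most one particle per site; each particle jumps one step to the right at rate $p$ and one step to the left at rate $q$, a jump being suppressed if the target site is occupied; configurations are $x_1<\cdots<x_N$. *)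

theory Defs
  imports Complex_Main
begin

text \<open>A chain is given by jump rates rate x y (for y different from x) which vanish
outside a finite neighbourhood nb x. Since rates are bounded, the
transition probabilities are the entries of exp(tQ), computed as a power series;
the n-th power of Q is a finite sum over neighbourhoods.\<close>

definition generator :: "('a \<Rightarrow> 'a \<Rightarrow> real) \<Rightarrow> ('a \<Rightarrow> 'a set) \<Rightarrow> 'a \<Rightarrow> 'a \<Rightarrow> real" where
  "generator rate nb x y =
     (if x = y then - (\<Sum>z\<in>nb x - {x}. rate x z) else rate x y)"

fun gen_pow :: "('a \<Rightarrow> 'a \<Rightarrow> real) \<Rightarrow> ('a \<Rightarrow> 'a set) \<Rightarrow> nat \<Rightarrow> 'a \<Rightarrow> 'a \<Rightarrow> real" where
  "gen_pow rate nb 0 x y = (if x = y then 1 else 0)"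
| "gen_pow rate nb (Suc n) x y = (\<Sum>z\<in>nb x. generator rate nb x z * gen_pow rate nb n z y)"

definition trans_prob :: "('a \<Rightarrow> 'a \<Rightarrow> real) \<Rightarrow> ('a \<Rightarrow> 'a set) \<Rightarrow> real \<Rightarrow> 'a \<Rightarrow> 'a \<Rightarrow> real" where
  "trans_prob rate nb t x y = (\<Sum>n. t ^ n / fact n * gen_pow rate nb n x y)"

text \<open>A configuration of N particles is an int list of length N (ordered positions
x_1,...,x_N, indexed 0..N-1 here). One jump moves a single particle by one step.\<close>

definition nbhd :: "int list \<Rightarrow> int list set" where
  "nbhd x = {x} \<union> {x[i := x ! i + 1] | i. i < length x} \<union> {x[i := x ! i - 1] | i. i < length x}"

text \<open>AZRP in ordered coordinates: from each occupied site one particle leaves at rate 1,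
to the right w.p. p, to the left w.p. q. To keep order, the right-moving particle is the
one with the largest index at the site, the left-moving one the smallest index.\<close>
definition azrp_rate :: "real \<Rightarrow> real \<Rightarrow> int list \<Rightarrow> int list \<Rightarrow> real" where
  "azrp_rate p q x y =
    (\<Sum>i<length x.
       (if y = x[i := x ! i + 1] \<and> (Suc i = length x \<or> x ! i < x ! Suc i) then p else 0)
     + (if y = x[i := x ! i - 1] \<and> (i = 0 \<or> x ! (i - 1) < x ! i) then q else 0))"

definition asep_rate :: "real \<Rightarrow> real \<Rightarrow> int list \<Rightarrow> int list \<Rightarrow> real" where
  "asep_rate p q x y =
    (\<Sum>i<length x.
       (if y = x[i := x ! i + 1] \<and> (Suc i = length x \<or> x ! i + 1 < x ! Suc i) then p else 0)
     + (if y = x[i := x ! i - 1] \<and> (i = 0 \<or> x ! (i - 1) < x ! i - 1) then q else 0))"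

definition azrp_prob :: "real \<Rightarrow> real \<Rightarrow> int list \<Rightarrow> int list \<Rightarrow> real \<Rightarrow> real" where
  "azrp_prob p q Y X t = trans_prob (azrp_rate p q) nbhd t Y X"

definition asep_prob :: "real \<Rightarrow> real \<Rightarrow> int list \<Rightarrow> int list \<Rightarrow> real \<Rightarrow> real" where
  "asep_prob p q Y X t = trans_prob (asep_rate p q) nbhd t Y X"

definition shift_conf :: "int list \<Rightarrow> int list" where
  "shift_conf x = map (\<lambda>i. x ! i + int (Suc i)) [0..<length x]"

end

theory Submission
  imports Defs
begin

text \<open>The shift f is a bijection between configurations that maps the neighbourhood of x onto the
neighbourhood of f x and turns AZRP rates into ASEP rates: a particle at x_i that may jump right
in the AZRP (x_i < x_(i+1)) is exactly one that may jump right in the ASEP after shifting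
(x_i + i + 2 < x_(i+1) + i + 2), and symmetrically for left jumps. Hence f is an isomorphism of
the two Markov chains, so the generators, all their powers, and the exponential series agree.
This holds for all int lists.\<close>

locale chain_isomorphism =
  fixes f :: "'a \<Rightarrow> 'b"
    and rate :: "'a \<Rightarrow> 'a \<Rightarrow> real" and nb :: "'a \<Rightarrow> 'a set"
    and rate' :: "'b \<Rightarrow> 'b \<Rightarrow> real" and nb' :: "'b \<Rightarrow> 'b set"
  assumes inj: "inj f"
    and nb_image: "nb' (f x) = f ` nb x"
    and rate_image: "rate' (f x) (f y) = rate x y"
begin

lemma generator_image: "generator rate' nb' (f x) (f y) = generator rate nb x y"
proof -
  have "(\<Sum>z\<in>nb' (f x) - {f x}. rate' (f x) z) = (\<Sum>z\<in>f ` (nb x - {x}). rate' (f x) z)"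
    by (simp add: nb_image image_set_diff[OF inj])
  also have "\<dots> = (\<Sum>z\<in>nb x - {x}. rate x z)"
    by (subst sum.reindex) (auto intro: inj_on_subset[OF inj] simp: rate_image)
  finally show ?thesis
    unfolding generator_def by (cases "x = y") (simp_all add: inj_eq[OF inj] rate_image)
qed

lemma gen_pow_image: "gen_pow rate' nb' n (f x) (f y) = gen_pow rate nb n x y"
proof (induction n arbitrary: x)
  case 0
  show ?case by (simp add: inj_eq[OF inj])
next
  case (Suc n)
  have "gen_pow rate' nb' (Suc n) (f x) (f y)
      = (\<Sum>z\<in>f ` nb x. generator rate' nb' (f x) z * gen_pow rate' nb' n z (f y))"
    by (simp add: nb_image)
  also have "\<dots> = (\<Sum>z\<in>nb x. generator rate nb x z * gen_pow rate nb n z y)"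
    by (subst sum.reindex) (auto intro: inj_on_subset[OF inj] simp: generator_image Suc.IH)
  finally show ?case by simp
qed

lemma trans_prob_image: "trans_prob rate' nb' t (f x) (f y) = trans_prob rate nb t x y"
  unfolding trans_prob_def by (simp add: gen_pow_image)

end

lemma length_shift_conf [simp]: "length (shift_conf x) = length x"
  by (simp add: shift_conf_def)

lemma nth_shift_conf [simp]: "i < length x \<Longrightarrow> shift_conf x ! i = x ! i + int (Suc i)"
  by (simp add: shift_conf_def)

lemma inj_shift_conf: "inj shift_conf"
proof (rule injI)
  fix x y assume eq: "shift_conf x = shift_conf y"
  then have "length x = length y" by (metis length_shift_conf)
  moreover have "x ! i = y ! i" if "i < length x" for i
    using arg_cong[OF eq, of "\<lambda>z. z ! i"] that \<open>length x = length y\<close> by simp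
  ultimately show "x = y" by (rule nth_equalityI)
qed

lemma shift_conf_eq_iff [simp]: "shift_conf x = shift_conf y \<longleftrightarrow> x = y"
  using inj_shift_conf by (simp add: inj_eq)

lemma shift_conf_step:
  "i < length x \<Longrightarrow> (shift_conf x)[i := shift_conf x ! i + d] = shift_conf (x[i := x ! i + d])"
  by (rule nth_equalityI) (auto simp: nth_list_update)

lemma nbhd_shift_conf: "nbhd (shift_conf x) = shift_conf ` nbhd x"
proof -
  have "{(shift_conf x)[i := shift_conf x ! i + d] | i. i < length x}
      = shift_conf ` {x[i := x ! i + d] | i. i < length x}" for d
    by (auto simp del: nth_shift_conf simp: shift_conf_step) (metis shift_conf_step)
  from this[of 1] this[of "-1"] show ?thesis
    unfolding nbhd_def length_shift_conf by (simp add: image_Un)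
qed

lemma asep_rate_shift_conf: "asep_rate p q (shift_conf x) (shift_conf y) = azrp_rate p q x y"
  unfolding asep_rate_def azrp_rate_def length_shift_conf
proof (rule sum.cong[OF refl])
  fix i assume "i \<in> {..<length x}"
  then have i: "i < length x" by simp
  have right: "(shift_conf y = (shift_conf x)[i := shift_conf x ! i + 1]) = (y = x[i := x ! i + 1])"
    using shift_conf_step[OF i, of 1] by simp
  have left: "(shift_conf y = (shift_conf x)[i := shift_conf x ! i - 1]) = (y = x[i := x ! i - 1])"
    using shift_conf_step[OF i, of "-1"] by simp
  have right_free: "(Suc i = length x \<or> shift_conf x ! i + 1 < shift_conf x ! Suc i)
      = (Suc i = length x \<or> x ! i < x ! Suc i)"
    using i by (cases "Suc i = length x") auto
  have left_free: "(i = 0 \<or> shift_conf x ! (i - 1) < shift_conf x ! i - 1) = (i = 0 \<or> x ! (i - 1) < x ! i)"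
    using i by (cases i) auto
  show "(if shift_conf y = (shift_conf x)[i := shift_conf x ! i + 1]
            \<and> (Suc i = length x \<or> shift_conf x ! i + 1 < shift_conf x ! Suc i) then p else 0)
      + (if shift_conf y = (shift_conf x)[i := shift_conf x ! i - 1]
            \<and> (i = 0 \<or> shift_conf x ! (i - 1) < shift_conf x ! i - 1) then q else 0)
      = (if y = x[i := x ! i + 1] \<and> (Suc i = length x \<or> x ! i < x ! Suc i) then p else 0)
      + (if y = x[i := x ! i - 1] \<and> (i = 0 \<or> x ! (i - 1) < x ! i) then q else 0)"
    by (simp only: right left right_free left_free)
qed

theorem mainTheorem3:
  fixes N :: nat and p q t :: real and X Y :: "int list"
  assumes "N \<ge> 1" and "p > 0" and "q > 0" and "p + q = 1"
    and "length X = N" and "length Y = N" and "sorted X" and "sorted Y"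
    and "t \<ge> 0"
  shows "azrp_prob p q Y X t = asep_prob p q (shift_conf Y) (shift_conf X) t"
proof -
  interpret chain_isomorphism shift_conf "azrp_rate p q" nbhd "asep_rate p q" nbhd
    by unfold_locales (simp_all add: inj_shift_conf nbhd_shift_conf asep_rate_shift_conf)
  show ?thesis
    unfolding azrp_prob_def asep_prob_def by (simp add: trans_prob_image)
qed

end
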